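(* Let $p$ be a prime, $\alpha,\beta\ge1$, $x_0\in\mathbb{Z}_{p^\alpha}$, and let $\hat x_0\in\{0,\dots,p^\alpha-1\}$ be its least nonnegative representative. Let $\binom{0}{X-x_0}_{p^\alpha,p^\beta}$ be the map $\mathbb{Z}\to\mathbb{Z}_{p^\beta}$ with value $1$ at $x\equiv x_0\pmod{p^\alpha}$ and $0$ elsewhere. Then, with $d:=p^\alpha-1+(\beta-1)(p-1)p^{\alpha-1}$, $$\binom{0}{X-x_0}_{p^\alpha,p^\beta}=\sum_{\delta=0}^d\binom{\delta}{\delta-x_0}_{p^\alpha,p^\beta}\binom{X}{\delta}\in\mathbb{Z}_{p^\beta}\binom{X}{\mathbb{Z}_{p^\alpha}},$$ where $\delta-x_0$ is the residue class of $\delta-\hat x_0$ modulo $p^\alpha$. For $\beta=1$ this specializes to $$\binom{0}{X-x_0}_{p^\alpha,p}=\sum_{\delta=\hat x_0}^{p^\alpha-1}(-1)^{\delta-\hat x_0}\binom{\delta}{\delta-\hat x_0}\binom{X}{\delta}\quad(\text{coefficients mod }p),$$ and in particular $\binom{0}{X}_{p^\alpha,p}=\binom{X}{0}-\binom{X}{1}+\binom{X}{2}\mp\cdots+(-1)^{p^\alpha-1}\binom{X}{p^\alpha-1}$ over $\mathbb{Z}_p$.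
   Context: $\mathbb{Z}_r=\mathbb{Z}/r\mathbb{Z}$; $\binom{X}{\delta}=X(X-1)\cdots(X-\delta+1)/\delta!$, $\binom{X}{0}=1$. For integers $d\ge0$, $q\ge1$, $r\ge0$ and $x\in\mathbb{Z}_q$: $\binom{d}{x}_q:=\sum_{\hat x\in x,\,\hat x\ge0}(-1)^{\hat x}\binom{d}{\hat x}\in\mathbb{Z}$ and $\binom{d}{x}_{q,r}:=\binom{d}{x}_q+r\mathbb{Z}$. An equality between a map $\mathbb{Z}\to\mathbb{Z}_r$ and a polyfract $\sum_\delta P_\delta\binom{X}{\delta}$ ($P_\delta\in\mathbb{Z}_r$) means the map equals $x\mapsto\sum_\delta\binom{x}{\delta}P_\delta$. $\mathbb{Z}_r\binom{X}{\mathbb{Z}_q}$ denotes the set of such polyfracts whose map is $q$-periodic. *)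

theory Defs
  imports "HOL-Number_Theory.Number_Theory"
begin

text \<open>The integer binom(d, x)_q for the residue class of the integer x modulo q:
  the sum over all nonnegative representatives k of the class of (-1)^k * (d choose k).
  Terms with k > d vanish, so only k \<le> d are summed.\<close>
definition binom_q :: "nat \<Rightarrow> nat \<Rightarrow> int \<Rightarrow> int" where
  "binom_q d q x = (\<Sum>k | k \<le> d \<and> [int k = x] (mod int q). (-1)^k * int (d choose k))"

text \<open>Binomial coefficient binom(X, delta) = X(X-1)...(X-delta+1)/delta! at an integer X
  (the division is exact).\<close>
definition int_binom :: "int \<Rightarrow> nat \<Rightarrow> int" where
  "int_binom x \<delta> = (\<Prod>i<\<delta>. x - int i) div fact \<delta>"

text \<open>The integer-valued map x \<mapsto> sum_{delta=0}^{d} binom(x, delta) * P delta (on all of Z);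
  an equality with values in Z_r is a congruence modulo r.\<close>
definition polyfract_eval :: "(nat \<Rightarrow> int) \<Rightarrow> nat \<Rightarrow> int \<Rightarrow> int" where
  "polyfract_eval P d x = (\<Sum>\<delta>\<le>d. int_binom x \<delta> * P \<delta>)"

definition indicator_res :: "nat \<Rightarrow> int \<Rightarrow> int \<Rightarrow> int" where
  "indicator_res q x0 x = (if [x = x0] (mod int q) then 1 else 0)"

end

theory Submission
  imports Defs
begin

text \<open>
  Write \<open>\<Delta>_t f x = f (x + t) - f x\<close> and \<open>\<Delta> = \<Delta>_1\<close>. The coefficients
  \<open>binom_q \<delta> q (\<delta> - x0)\<close> are exactly \<open>\<Delta>^\<delta> f 0\<close> for the indicator \<open>f\<close> of
  \<open>x0 + q\<int>\<close>, so the claim says that Newton interpolation of \<open>f\<close> truncated at degree \<open>d\<close>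
  is exact modulo \<open>p^\<beta>\<close>. This holds as soon as \<open>p^\<beta>\<close> divides every value of
  \<open>\<Delta>^(d + 1) f\<close>: the truncation error then vanishes modulo \<open>p^\<beta>\<close> on \<open>\<nat>\<close>, and
  since its \<open>(d + 1)\<close>-st difference does too, on all of \<open>\<int>\<close>.

  Let \<open>q = p^(k + 1)\<close> and \<open>\<phi> = p^k (p - 1)\<close>, so that \<open>d + 1 = p^k + \<beta> \<phi>\<close>. Modulo \<open>p\<close>
  the Frobenius identity gives \<open>\<Delta>^(p^k) \<equiv> \<Delta>_(p^k)\<close>. Hence for \<open>q\<close>-periodic \<open>f\<close>
  one has \<open>\<Delta>^(p^k) f = \<Delta>_(p^k) f + p g\<close> with \<open>g\<close> again \<open>q\<close>-periodic, where
  \<open>\<Delta>_(p^k) f\<close> has vanishing sums along the cycles \<open>x + p^k {0, \<dots>, p - 1}\<close>.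
  On such functions \<open>\<Delta>^\<phi> \<equiv> (\<Delta>_(p^k))^(p - 1)\<close> is the cycle sum modulo \<open>p\<close>,
  because \<open>(-1)^(p - 1 + j) binom(p - 1, j) \<equiv> 1\<close>; so every further \<open>\<phi>\<close> differences gain
  a factor \<open>p\<close>, and induction on \<open>\<beta>\<close> yields \<open>p^\<beta> | \<Delta>^(p^k + \<beta> \<phi>) f\<close>.
\<close>

definition fwd_diff :: "int \<Rightarrow> (int \<Rightarrow> int) \<Rightarrow> int \<Rightarrow> int" where
  "fwd_diff t f x = f (x + t) - f x"

lemma fwd_diff_funpow:
  "(fwd_diff t ^^ n) f x = (\<Sum>j\<le>n. (-1) ^ (n + j) * int (n choose j) * f (x + t * int j))"
proof (induction n arbitrary: x)
  case 0
  then show ?case by simp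
next
  case (Suc n)
  define g where "g j = f (x + t * int j)" for j
  have L: "(fwd_diff t ^^ Suc n) f x = (\<Sum>j\<le>n. (-1) ^ (n + j) * int (n choose j) * g (Suc j))
          - (\<Sum>j\<le>n. (-1) ^ (n + j) * int (n choose j) * g j)"
    by (simp add: fwd_diff_def Suc g_def algebra_simps)
  have "(\<Sum>j\<le>n. (-1) ^ (n + j) * int (n choose j) * g j)
      = (\<Sum>j\<le>Suc n. (-1) ^ (n + j) * int (n choose j) * g j)"
    by simp
  also have "\<dots> = (-1) ^ n * g 0 + (\<Sum>j\<le>n. (-1) ^ (n + Suc j) * int (n choose Suc j) * g (Suc j))"
    by (subst sum.atMost_Suc_shift) simp
  also have "\<dots> = (-1) ^ n * g 0 - (\<Sum>j\<le>n. (-1) ^ (n + j) * int (n choose Suc j) * g (Suc j))"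
    by (simp add: sum_negf[symmetric])
  finally have A: "(\<Sum>j\<le>n. (-1) ^ (n + j) * int (n choose j) * g j)
      = (-1) ^ n * g 0 - (\<Sum>j\<le>n. (-1) ^ (n + j) * int (n choose Suc j) * g (Suc j))" .
  have R: "(\<Sum>j\<le>Suc n. (-1) ^ (Suc n + j) * int (Suc n choose j) * g j)
      = - ((-1) ^ n * g 0) + (\<Sum>j\<le>n. (-1) ^ (n + j) * int (n choose j) * g (Suc j))
        + (\<Sum>j\<le>n. (-1) ^ (n + j) * int (n choose Suc j) * g (Suc j))"
    by (subst sum.atMost_Suc_shift) (simp add: algebra_simps sum.distrib)
  show ?case using L A R by (simp add: g_def)
qed

lemma fwd_diff_funpow_Suc:
  "(fwd_diff t ^^ Suc n) f x = (fwd_diff t ^^ n) f (x + t) - (fwd_diff t ^^ n) f x"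
  by (simp only: funpow.simps(2) comp_apply fwd_diff_def[of t "(fwd_diff t ^^ n) f" x])

lemma fwd_diff_funpow_diff:
  "(fwd_diff t ^^ n) (\<lambda>y. f y - g y) x = (fwd_diff t ^^ n) f x - (fwd_diff t ^^ n) g x"
  by (simp add: fwd_diff_funpow sum_subtractf[symmetric] algebra_simps)

lemma fwd_diff_funpow_add:
  "(fwd_diff t ^^ n) (\<lambda>y. f y + g y) x = (fwd_diff t ^^ n) f x + (fwd_diff t ^^ n) g x"
  by (simp add: fwd_diff_funpow sum.distrib[symmetric] algebra_simps)

lemma fwd_diff_funpow_cmult:
  "(fwd_diff t ^^ n) (\<lambda>y. c * f y) x = c * (fwd_diff t ^^ n) f x"
  by (simp add: fwd_diff_funpow sum_distrib_left algebra_simps)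

lemma fwd_diff_funpow_sum:
  "(fwd_diff t ^^ n) (\<lambda>y. \<Sum>i\<in>I. f i y) x = (\<Sum>i\<in>I. (fwd_diff t ^^ n) (f i) x)"
  by (simp add: fwd_diff_funpow sum_distrib_left sum.swap[of _ I] algebra_simps)

lemma fwd_diff_funpow_shift:
  "(fwd_diff t ^^ n) (\<lambda>y. f (y + c)) x = (fwd_diff t ^^ n) f (x + c)"
  unfolding fwd_diff_funpow by (rule sum.cong) (simp_all add: ac_simps)

lemma fwd_diff_funpow_periodic:
  assumes "\<And>y. f (y + c) = f y"
  shows "(fwd_diff t ^^ n) f (x + c) = (fwd_diff t ^^ n) f x"
  using fwd_diff_funpow_shift[where f = f and c = c] assms by simp

lemma dvd_fwd_diff_funpow:
  "(\<And>y. m dvd f y) \<Longrightarrow> m dvd (fwd_diff t ^^ n) f x"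
  by (simp add: fwd_diff_funpow dvd_sum)

lemma dvd_fwd_diff_funpow_ge:
  assumes "\<And>y. m dvd (fwd_diff t ^^ n) f y" and "n \<le> k"
  shows "m dvd (fwd_diff t ^^ k) f x"
proof -
  have "(fwd_diff t ^^ k) f x = (fwd_diff t ^^ (k - n)) ((fwd_diff t ^^ n) f) x"
    using \<open>n \<le> k\<close> by (metis comp_apply funpow_add le_add_diff_inverse2)
  then show ?thesis using dvd_fwd_diff_funpow[of m, OF assms(1)] by simp
qed

lemma fwd_diff_funpow_cong:
  "(\<And>y. [f y = g y] (mod m)) \<Longrightarrow> [(fwd_diff t ^^ n) f x = (fwd_diff t ^^ n) g x] (mod m)"
  unfolding fwd_diff_funpow by (intro cong_sum cong_mult cong_refl) auto

lemma funpow_fwd_diff_funpow_cong: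
  assumes "\<And>g y. [(fwd_diff 1 ^^ N) g y = fwd_diff t g y] (mod m)"
  shows "[((fwd_diff 1 ^^ N) ^^ k) f x = (fwd_diff t ^^ k) f x] (mod m)"
proof (induction k arbitrary: x)
  case 0
  then show ?case by simp
next
  case (Suc k)
  have "[(fwd_diff 1 ^^ N) (((fwd_diff 1 ^^ N) ^^ k) f) x = (fwd_diff 1 ^^ N) ((fwd_diff t ^^ k) f) x] (mod m)"
    by (rule fwd_diff_funpow_cong) (rule Suc)
  also have "[(fwd_diff 1 ^^ N) ((fwd_diff t ^^ k) f) x = fwd_diff t ((fwd_diff t ^^ k) f) x] (mod m)"
    by (rule assms)
  finally show ?case by simp
qed

subsection \<open>Forward differences modulo a prime\<close>

lemma minus_one_power_prime_cong:
  assumes "prime (p::nat)"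
  shows "[(-1::int) ^ p = -1] (mod int p)"
proof (cases "p = 2")
  case True
  then show ?thesis by (simp add: cong_def)
next
  case False
  then have "odd p" using prime_odd_nat[OF assms] prime_ge_2_nat[OF assms] by simp
  then show ?thesis by simp
qed

lemma fwd_diff_funpow_prime_cong:
  assumes "prime p"
  shows "[(fwd_diff t ^^ p) f x = fwd_diff (t * int p) f x] (mod int p)"
proof -
  have p0: "p > 0" using assms prime_gt_0_nat by blast
  have "[(-1) ^ (p + j) * int (p choose j) * f (x + t * int j)
        = (if j = 0 then - f x else 0) + (if j = p then f (x + t * int p) else 0)] (mod int p)"
    if "j \<le> p" for j
  proof -
    consider "j = 0" | "j = p" | "0 < j" "j < p" using \<open>j \<le> p\<close> by linarith
    then show ?thesis
    proof cases
      case 1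
      then show ?thesis
        using p0 cong_mult[OF minus_one_power_prime_cong[OF assms] cong_refl[of "f x"]] by simp
    next
      case 2
      have "(-1::int) ^ (p + p) = 1" by (rule neg_one_even_power) simp
      then show ?thesis using 2 p0 by simp
    next
      case 3
      then have "int p dvd int (p choose j)" using dvd_choose_prime[OF _ _ _ assms] by auto
      then show ?thesis using 3 by (simp add: cong_0_iff)
    qed
  qed
  then have "[(fwd_diff t ^^ p) f x = (\<Sum>j\<le>p. (if j = 0 then - f x else 0)
                + (if j = p then f (x + t * int p) else 0))] (mod int p)"
    unfolding fwd_diff_funpow by (intro cong_sum) auto
  also have "(\<Sum>j\<le>p. (if j = 0 then - f x else 0) + (if j = p then f (x + t * int p) else 0))
      = fwd_diff (t * int p) f x"
    using p0 by (simp add: sum.distrib fwd_diff_def)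
  finally show ?thesis .
qed

lemma fwd_diff_funpow_prime_power_cong:
  assumes "prime p"
  shows "[(fwd_diff 1 ^^ (p ^ k)) f x = fwd_diff (int (p ^ k)) f x] (mod int p)"
proof (induction k arbitrary: f x)
  case 0
  then show ?case by simp
next
  case (Suc k)
  have "fwd_diff 1 ^^ (p ^ Suc k) = (fwd_diff 1 ^^ (p ^ k)) ^^ p"
    by (simp add: funpow_mult mult.commute)
  moreover have "[((fwd_diff 1 ^^ (p ^ k)) ^^ p) f x = (fwd_diff (int (p ^ k)) ^^ p) f x] (mod int p)"
    by (rule funpow_fwd_diff_funpow_cong) (rule Suc.IH)
  moreover have "[(fwd_diff (int (p ^ k)) ^^ p) f x = fwd_diff (int (p ^ k) * int p) f x] (mod int p)"
    by (rule fwd_diff_funpow_prime_cong[OF assms])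
  ultimately show ?case by (simp add: cong_trans mult.commute)
qed

lemma minus_one_power_choose_prime_minus_one_cong:
  assumes "prime p" and "j \<le> p - 1"
  shows "[(-1::int) ^ (p - 1 + j) * int ((p - 1) choose j) = 1] (mod int p)"
  using assms(2)
proof (induction j)
  case 0
  have p0: "p > 0" using assms prime_gt_0_nat by blast
  have "(-1::int) ^ (p - 1) = - ((-1) ^ p)" using p0 by (cases p) auto
  moreover have "[- ((-1::int) ^ p) = - (-1)] (mod int p)"
    using minus_one_power_prime_cong[OF assms(1)] cong_minus_minus_iff by blast
  ultimately show ?case by simp
next
  case (Suc j)
  have p0: "p > 0" using assms prime_gt_0_nat by blast
  have "p choose Suc j = ((p - 1) choose j) + ((p - 1) choose Suc j)"
    using p0 by (cases p) auto
  moreover have "p dvd (p choose Suc j)"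
    using dvd_choose_prime[OF _ _ _ assms(1)] Suc.prems p0 by auto
  ultimately have "[int ((p - 1) choose Suc j) = - int ((p - 1) choose j)] (mod int p)"
    by (metis add.commute cong_iff_dvd_diff diff_minus_eq_add of_nat_add of_nat_dvd_iff)
  then have "[(-1::int) ^ (p - 1 + Suc j) * int ((p - 1) choose Suc j)
            = (-1) ^ (p - 1 + Suc j) * (- int ((p - 1) choose j))] (mod int p)"
    by (rule cong_mult[OF cong_refl])
  then show ?case using Suc by (simp add: cong_trans)
qed

subsection \<open>Functions with vanishing cycle sums\<close>

definition zero_cycle_sums :: "nat \<Rightarrow> int \<Rightarrow> (int \<Rightarrow> int) \<Rightarrow> bool" where
  "zero_cycle_sums p s h \<longleftrightarrow> (\<forall>x. (\<Sum>i<p. h (x + s * int i)) = 0)"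

lemma zero_cycle_sums_fwd_diff_periodic:
  assumes "\<And>y. f (y + s * int p) = f y"
  shows "zero_cycle_sums p s (fwd_diff s f)"
  unfolding zero_cycle_sums_def
proof
  fix x
  have "(\<Sum>i<p. fwd_diff s f (x + s * int i)) = (\<Sum>i<p. f (x + s * int (Suc i)) - f (x + s * int i))"
    unfolding fwd_diff_def by (simp add: algebra_simps)
  also have "\<dots> = f (x + s * int p) - f (x + s * int 0)"
    by (rule sum_lessThan_telescope)
  finally show "(\<Sum>i<p. fwd_diff s f (x + s * int i)) = 0" using assms by simp
qed

lemma zero_cycle_sums_fwd_diff_funpow:
  assumes "zero_cycle_sums p s h"
  shows "zero_cycle_sums p s ((fwd_diff t ^^ n) h)"
  unfolding zero_cycle_sums_def
proof
  fix x
  have "(\<Sum>i<p. (fwd_diff t ^^ n) h (x + s * int i))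
      = (fwd_diff t ^^ n) (\<lambda>y. \<Sum>i<p. h (y + s * int i)) x"
    by (simp add: fwd_diff_funpow_shift fwd_diff_funpow_sum)
  also have "\<dots> = 0"
    using assms unfolding zero_cycle_sums_def by (simp add: fwd_diff_funpow)
  finally show "(\<Sum>i<p. (fwd_diff t ^^ n) h (x + s * int i)) = 0" .
qed

lemma fwd_diff_funpow_zero_cycle_sums_cong:
  assumes "prime p" and "zero_cycle_sums p (int (p ^ k)) h"
  shows "[(fwd_diff 1 ^^ (p ^ k * (p - 1))) h x = 0] (mod int p)"
proof -
  have p0: "p > 0" using assms prime_gt_0_nat by blast
  have "fwd_diff 1 ^^ (p ^ k * (p - 1)) = (fwd_diff 1 ^^ (p ^ k)) ^^ (p - 1)"
    by (simp add: funpow_mult)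
  moreover have "[((fwd_diff 1 ^^ (p ^ k)) ^^ (p - 1)) h x = (fwd_diff (int (p ^ k)) ^^ (p - 1)) h x] (mod int p)"
    by (rule funpow_fwd_diff_funpow_cong) (rule fwd_diff_funpow_prime_power_cong[OF assms(1)])
  moreover have "[(fwd_diff (int (p ^ k)) ^^ (p - 1)) h x
                  = (\<Sum>j\<le>p - 1. 1 * h (x + int (p ^ k) * int j))] (mod int p)"
    unfolding fwd_diff_funpow
    by (intro cong_sum cong_mult cong_refl minus_one_power_choose_prime_minus_one_cong[OF assms(1)]) simp
  moreover have "(\<Sum>j\<le>p - 1. 1 * h (x + int (p ^ k) * int j)) = 0"
    using assms(2) p0 unfolding zero_cycle_sums_def by (simp add: lessThan_Suc_atMost[symmetric])
  ultimately show ?thesis by (metis cong_trans)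
qed

lemma prime_power_dvd_fwd_diff_zero_cycle_sums:
  assumes "prime p" and "zero_cycle_sums p (int (p ^ k)) h"
  shows "int p ^ m dvd (fwd_diff 1 ^^ (m * (p ^ k * (p - 1)))) h x"
  using assms(2)
proof (induction m arbitrary: h x)
  case 0
  then show ?case by simp
next
  case (Suc m)
  define \<phi> where "\<phi> = p ^ k * (p - 1)"
  define g where "g = (fwd_diff 1 ^^ \<phi>) h"
  define g' where "g' y = g y div int p" for y
  have "int p dvd g y" for y
    using fwd_diff_funpow_zero_cycle_sums_cong[OF assms(1) Suc.prems]
    unfolding g_def \<phi>_def by (simp add: cong_0_iff)
  then have g: "g = (\<lambda>y. int p * g' y)"
    unfolding g'_def by auto
  have "zero_cycle_sums p (int (p ^ k)) g"
    unfolding g_def by (rule zero_cycle_sums_fwd_diff_funpow[OF Suc.prems])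
  moreover have "int p \<noteq> 0" using assms prime_gt_0_nat by simp
  ultimately have "zero_cycle_sums p (int (p ^ k)) g'"
    unfolding zero_cycle_sums_def g by (simp add: sum_distrib_left[symmetric])
  then have IH: "int p ^ m dvd (fwd_diff 1 ^^ (m * \<phi>)) g' x"
    using Suc.IH unfolding \<phi>_def by blast
  have "Suc m * \<phi> = m * \<phi> + \<phi>" by simp
  then have "(fwd_diff 1 ^^ (Suc m * \<phi>)) h x = (fwd_diff 1 ^^ (m * \<phi>)) g x"
    unfolding g_def by (simp only: funpow_add comp_apply)
  also have "\<dots> = int p * (fwd_diff 1 ^^ (m * \<phi>)) g' x"
    unfolding g by (rule fwd_diff_funpow_cmult)
  finally show ?case using IH unfolding \<phi>_def by (simp add: mult_dvd_mono)
qed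

lemma prime_power_dvd_fwd_diff_periodic:
  assumes "prime p" and "\<And>y. f (y + int (p ^ Suc k)) = f y"
  shows "int p ^ b dvd (fwd_diff 1 ^^ (p ^ k + b * (p ^ k * (p - 1)))) f x"
  using assms(2)
proof (induction b arbitrary: f x)
  case 0
  then show ?case by simp
next
  case (Suc b)
  define \<phi> where "\<phi> = p ^ k * (p - 1)"
  define h where "h = fwd_diff (int (p ^ k)) f"
  define g where "g y = ((fwd_diff 1 ^^ (p ^ k)) f y - h y) div int p" for y
  have "int p dvd (fwd_diff 1 ^^ (p ^ k)) f y - h y" for y
    using fwd_diff_funpow_prime_power_cong[OF assms(1), of k f y]
    unfolding h_def by (simp add: cong_iff_dvd_diff)
  then have split: "(fwd_diff 1 ^^ (p ^ k)) f = (\<lambda>y. h y + int p * g y)"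
    unfolding g_def by auto
  have "zero_cycle_sums p (int (p ^ k)) h"
    unfolding h_def using Suc.prems by (intro zero_cycle_sums_fwd_diff_periodic) (simp add: mult.commute)
  then have h_dvd: "int p ^ Suc b dvd (fwd_diff 1 ^^ (Suc b * \<phi>)) h x"
    unfolding \<phi>_def by (rule prime_power_dvd_fwd_diff_zero_cycle_sums[OF assms(1)])
  have "g (y + int (p ^ Suc k)) = g y" for y
  proof -
    have "h (y + int (p ^ Suc k)) = h y"
      using Suc.prems[of y] Suc.prems[of "y + int (p ^ k)"] unfolding h_def fwd_diff_def by (simp add: ac_simps)
    moreover have "(fwd_diff 1 ^^ (p ^ k)) f (y + int (p ^ Suc k)) = (fwd_diff 1 ^^ (p ^ k)) f y"
      by (rule fwd_diff_funpow_periodic) (rule Suc.prems)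
    ultimately show ?thesis unfolding g_def by simp
  qed
  then have "int p ^ b dvd (fwd_diff 1 ^^ (p ^ k + b * \<phi>)) g y" for y
    using Suc.IH unfolding \<phi>_def by blast
  moreover have "p ^ k + b * \<phi> \<le> Suc b * \<phi>"
    using prime_ge_2_nat[OF assms(1)] unfolding \<phi>_def by simp
  ultimately have "int p ^ b dvd (fwd_diff 1 ^^ (Suc b * \<phi>)) g x"
    by (rule dvd_fwd_diff_funpow_ge)
  then have g_dvd: "int p ^ Suc b dvd int p * (fwd_diff 1 ^^ (Suc b * \<phi>)) g x"
    by (simp add: mult_dvd_mono)
  have "p ^ k + Suc b * \<phi> = Suc b * \<phi> + p ^ k" by simp
  then have "(fwd_diff 1 ^^ (p ^ k + Suc b * \<phi>)) f x
      = (fwd_diff 1 ^^ (Suc b * \<phi>)) (\<lambda>y. h y + int p * g y) x"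
    by (simp only: funpow_add comp_apply split)
  also have "\<dots> = (fwd_diff 1 ^^ (Suc b * \<phi>)) h x + int p * (fwd_diff 1 ^^ (Suc b * \<phi>)) g x"
    by (simp add: fwd_diff_funpow_add fwd_diff_funpow_cmult)
  finally show ?case using h_dvd g_dvd unfolding \<phi>_def by (simp add: dvd_add)
qed

subsection \<open>Newton interpolation\<close>

lemma newton_forward_expansion:
  "f (int n) = (\<Sum>\<delta>\<le>n. int (n choose \<delta>) * (fwd_diff 1 ^^ \<delta>) f 0)"
proof (induction n arbitrary: f)
  case 0
  then show ?case by simp
next
  case (Suc n)
  define a where "a \<delta> = (fwd_diff 1 ^^ \<delta>) f 0" for \<delta>
  have shift: "(fwd_diff 1 ^^ \<delta>) (\<lambda>y. f (y + 1)) 0 = a \<delta> + a (Suc \<delta>)" for \<delta>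
    unfolding a_def fwd_diff_funpow_shift by (simp add: fwd_diff_def)
  have "f (int (Suc n)) = (\<lambda>y. f (y + 1)) (int n)" by (simp add: add.commute)
  also have "\<dots> = (\<Sum>\<delta>\<le>n. int (n choose \<delta>) * a \<delta>) + (\<Sum>\<delta>\<le>n. int (n choose \<delta>) * a (Suc \<delta>))"
    by (subst Suc.IH) (simp add: shift algebra_simps sum.distrib)
  also have "(\<Sum>\<delta>\<le>n. int (n choose \<delta>) * a \<delta>) = (\<Sum>\<delta>\<le>Suc n. int (n choose \<delta>) * a \<delta>)"
    by simp
  also have "\<dots> = a 0 + (\<Sum>\<delta>\<le>n. int (n choose Suc \<delta>) * a (Suc \<delta>))"
    by (subst sum.atMost_Suc_shift) simp
  also have "a 0 + (\<Sum>\<delta>\<le>n. int (n choose Suc \<delta>) * a (Suc \<delta>)) + (\<Sum>\<delta>\<le>n. int (n choose \<delta>) * a (Suc \<delta>))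
      = (\<Sum>\<delta>\<le>Suc n. int (Suc n choose \<delta>) * a \<delta>)"
    by (subst sum.atMost_Suc_shift) (simp add: algebra_simps sum.distrib)
  finally show ?case unfolding a_def .
qed

lemma int_binom_Suc_Suc: "int_binom (x + 1) (Suc k) = int_binom x k + int_binom x (Suc k)"
  using gbinomial_int_Suc_Suc[of x k] unfolding int_binom_def
  by (simp add: gbinomial_prod_rev atLeast0LessThan)

lemma int_binom_0 [simp]: "int_binom x 0 = 1"
  by (simp add: int_binom_def)

lemma int_binom_0_left: "int_binom 0 m = (if m = 0 then 1 else 0)"
proof (cases m)
  case (Suc n)
  then have "(\<Prod>i<m. (0::int) - int i) = 0" by (intro prod_zero) auto
  then have "int_binom 0 m = 0" unfolding int_binom_def by (simp only:) simp
  then show ?thesis using Suc by simp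
qed simp

lemma fwd_diff_funpow_int_binom:
  "(fwd_diff 1 ^^ \<delta>) (\<lambda>y. int_binom y k) x = (if \<delta> \<le> k then int_binom x (k - \<delta>) else 0)"
proof (induction \<delta> arbitrary: x)
  case 0
  then show ?case by simp
next
  case (Suc \<delta>)
  show ?case
  proof (cases "Suc \<delta> \<le> k")
    case True
    then have "k - \<delta> = Suc (k - Suc \<delta>)" by simp
    then show ?thesis
      unfolding fwd_diff_funpow_Suc Suc.IH using True by (simp add: int_binom_Suc_Suc)
  next
    case False
    then show ?thesis unfolding fwd_diff_funpow_Suc Suc.IH by (cases "\<delta> = k") auto
  qed
qed

lemma fwd_diff_funpow_polyfract_eval:
  "(fwd_diff 1 ^^ \<delta>) (polyfract_eval P d) x
    = (\<Sum>k\<le>d. P k * (if \<delta> \<le> k then int_binom x (k - \<delta>) else 0))"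
proof -
  have "polyfract_eval P d = (\<lambda>y. \<Sum>k\<le>d. P k * int_binom y k)"
    by (intro ext) (simp add: polyfract_eval_def mult.commute)
  then show ?thesis
    by (simp add: fwd_diff_funpow_sum fwd_diff_funpow_cmult fwd_diff_funpow_int_binom)
qed

lemma fwd_diff_funpow_polyfract_eval_0:
  "(fwd_diff 1 ^^ \<delta>) (polyfract_eval P d) 0 = (if \<delta> \<le> d then P \<delta> else 0)"
proof -
  have "(fwd_diff 1 ^^ \<delta>) (polyfract_eval P d) 0 = (\<Sum>k\<le>d. if k = \<delta> then P k else 0)"
    unfolding fwd_diff_funpow_polyfract_eval by (rule sum.cong) (auto simp: int_binom_0_left)
  then show ?thesis by simp
qed

lemma fwd_diff_funpow_polyfract_eval_above_degree:
  "d < \<delta> \<Longrightarrow> (fwd_diff 1 ^^ \<delta>) (polyfract_eval P d) x = 0"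
  unfolding fwd_diff_funpow_polyfract_eval by (intro sum.neutral) auto

lemma dvd_if_dvd_fwd_diff_funpow_and_nonneg:
  fixes E :: "int \<Rightarrow> int"
  assumes diff: "\<And>y. m dvd (fwd_diff 1 ^^ Suc N) E y" and nonneg: "\<And>n. m dvd E (int n)"
  shows "m dvd E x"
proof -
  have "m dvd E (int j - int n)" for j n
  proof (induction n arbitrary: j)
    case 0
    then show ?case using nonneg by simp
  next
    case (Suc n)
    define y where "y = int j - int (Suc n)"
    define S where "S = (\<Sum>i\<le>N. (-1) ^ (Suc N + Suc i) * int (Suc N choose Suc i) * E (y + 1 * int (Suc i)))"
    have "(fwd_diff 1 ^^ Suc N) E y = (-1) ^ Suc N * E y + S"
      unfolding fwd_diff_funpow S_def by (subst sum.atMost_Suc_shift) simp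
    moreover have "m dvd S"
      unfolding S_def y_def using Suc.IH[of "j + _"]
      by (intro dvd_sum dvd_mult) (simp add: algebra_simps)
    ultimately have "m dvd (-1) ^ Suc N * ((-1) ^ Suc N * E y)"
      using diff[of y] by (metis add_diff_cancel_right' dvd_diff dvd_mult)
    then show ?case by (simp add: y_def flip: mult.assoc power_add)
  qed
  moreover obtain j n where "x = int j - int n" by (rule int_diff_cases)
  ultimately show ?thesis by simp
qed

lemma cong_polyfract_eval_fwd_diff:
  assumes "\<And>y. m dvd (fwd_diff 1 ^^ Suc N) f y"
  shows "[f x = polyfract_eval (\<lambda>\<delta>. (fwd_diff 1 ^^ \<delta>) f 0) N x] (mod m)"
proof -
  define F where "F = polyfract_eval (\<lambda>\<delta>. (fwd_diff 1 ^^ \<delta>) f 0) N"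
  define E where "E y = f y - F y" for y
  have E_diff: "(fwd_diff 1 ^^ \<delta>) E y = (fwd_diff 1 ^^ \<delta>) f y - (fwd_diff 1 ^^ \<delta>) F y" for \<delta> y
    unfolding E_def by (rule fwd_diff_funpow_diff)
  have coeff_dvd: "m dvd (fwd_diff 1 ^^ \<delta>) E 0" for \<delta>
  proof (cases "\<delta> \<le> N")
    case True
    then show ?thesis unfolding E_diff F_def fwd_diff_funpow_polyfract_eval_0 by simp
  next
    case False
    then have "m dvd (fwd_diff 1 ^^ \<delta>) f 0" by (intro dvd_fwd_diff_funpow_ge[OF assms]) simp
    with False show ?thesis unfolding E_diff F_def fwd_diff_funpow_polyfract_eval_0 by simp
  qed
  then have nonneg: "m dvd E (int n)" for n
    by (simp only: newton_forward_expansion[of E n]) (intro dvd_sum dvd_mult coeff_dvd)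
  have "m dvd (fwd_diff 1 ^^ Suc N) E y" for y
    using assms[of y] unfolding E_diff F_def
    by (simp only: fwd_diff_funpow_polyfract_eval_above_degree[OF lessI] diff_0_right)
  then have "m dvd E x" using nonneg by (rule dvd_if_dvd_fwd_diff_funpow_and_nonneg)
  then show ?thesis unfolding E_def F_def by (simp add: cong_iff_dvd_diff)
qed

subsection \<open>The indicator of a residue class\<close>

lemma fwd_diff_funpow_indicator_res_0:
  "(fwd_diff 1 ^^ \<delta>) (indicator_res q x0) 0 = binom_q \<delta> q (int \<delta> - x0)"
proof -
  have "(fwd_diff 1 ^^ \<delta>) (indicator_res q x0) 0
      = (\<Sum>j\<le>\<delta>. if [int j = x0] (mod int q) then (-1) ^ (\<delta> + j) * int (\<delta> choose j) else 0)"
    unfolding fwd_diff_funpow indicator_res_def by (rule sum.cong) auto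
  also have "\<dots> = (\<Sum>k\<le>\<delta>. if [int k = int \<delta> - x0] (mod int q) then (-1) ^ k * int (\<delta> choose k) else 0)"
  proof (rule sum.reindex_bij_witness[where i = "\<lambda>k. \<delta> - k" and j = "\<lambda>k. \<delta> - k"])
    fix k assume "k \<in> {..\<delta>}"
    then have k: "k \<le> \<delta>" by simp
    have "int (\<delta> - k) - (int \<delta> - x0) = - (int k - x0)"
      using k by simp
    then have residue: "[int (\<delta> - k) = int \<delta> - x0] (mod int q) \<longleftrightarrow> [int k = x0] (mod int q)"
      unfolding cong_iff_dvd_diff by (simp only: dvd_minus_iff)
    have "\<delta> + k = (\<delta> - k) + 2 * k" using k by simp
    then have sign: "(-1::int) ^ (\<delta> + k) = (-1) ^ (\<delta> - k)"
      by (simp only: power_add power_mult) simp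
    show "(if [int (\<delta> - k) = int \<delta> - x0] (mod int q)
                      then (-1) ^ (\<delta> - k) * int (\<delta> choose (\<delta> - k)) else 0)
        = (if [int k = x0] (mod int q) then (-1) ^ (\<delta> + k) * int (\<delta> choose k) else 0)"
      using k residue sign by (simp add: binomial_symmetric[symmetric])
  qed auto
  also have "\<dots> = binom_q \<delta> q (int \<delta> - x0)"
  proof -
    have "{k. k \<le> \<delta> \<and> [int k = int \<delta> - x0] (mod int q)} = {k \<in> {..\<delta>}. [int k = int \<delta> - x0] (mod int q)}"
      by auto
    then show ?thesis unfolding binom_q_def by (simp only: sum.inter_filter[OF finite_atMost])
  qed
  finally show ?thesis .
qed

lemma indicator_res_cong_polyfract_eval:
  fixes p \<alpha> \<beta> :: nat and x0 :: int
  assumes "prime p" and "\<alpha> \<ge> 1" and "\<beta> \<ge> 1"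
  defines "d \<equiv> p ^ \<alpha> - 1 + (\<beta> - 1) * (p - 1) * p ^ (\<alpha> - 1)"
  shows "[indicator_res (p ^ \<alpha>) x0 x
      = polyfract_eval (\<lambda>\<delta>. binom_q \<delta> (p ^ \<alpha>) (int \<delta> - x0)) d x] (mod int (p ^ \<beta>))"
proof -
  obtain k where k: "\<alpha> = Suc k" using assms(2) by (cases \<alpha>) auto
  have "Suc d = p ^ k + \<beta> * (p ^ k * (p - 1))"
  proof -
    obtain b where b: "\<beta> = Suc b" using assms(3) by (cases \<beta>) auto
    define \<phi> where "\<phi> = p ^ k * (p - 1)"
    have "p ^ k \<ge> 1" using prime_gt_0_nat[OF assms(1)] by simp
    moreover have "p ^ \<alpha> = p ^ k + \<phi>"
      unfolding k \<phi>_def using prime_gt_0_nat[OF assms(1)] by (cases p) simp_all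
    moreover have "d = p ^ \<alpha> - 1 + b * \<phi>"
      unfolding d_def k b \<phi>_def by (simp add: ac_simps)
    ultimately show ?thesis unfolding b \<phi>_def[symmetric] by simp
  qed
  moreover have "indicator_res (p ^ \<alpha>) x0 (y + int (p ^ Suc k)) = indicator_res (p ^ \<alpha>) x0 y" for y
    unfolding indicator_res_def k cong_def by simp
  ultimately have "int p ^ \<beta> dvd (fwd_diff 1 ^^ Suc d) (indicator_res (p ^ \<alpha>) x0) y" for y
    using prime_power_dvd_fwd_diff_periodic[OF assms(1)] by metis
  then have "[indicator_res (p ^ \<alpha>) x0 x
      = polyfract_eval (\<lambda>\<delta>. (fwd_diff 1 ^^ \<delta>) (indicator_res (p ^ \<alpha>) x0) 0) d x] (mod int p ^ \<beta>)"
    by (rule cong_polyfract_eval_fwd_diff)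
  then show ?thesis by (simp only: fwd_diff_funpow_indicator_res_0 of_nat_power)
qed

lemma binom_q_below_modulus:
  assumes "\<delta> < q" and "x0 < q"
  shows "binom_q \<delta> q (int \<delta> - int x0)
    = (if x0 \<le> \<delta> then (-1) ^ (\<delta> - x0) * int (\<delta> choose (\<delta> - x0)) else 0)"
proof -
  have representative: "k \<le> \<delta> \<and> [int k = int \<delta> - int x0] (mod int q) \<longleftrightarrow> x0 \<le> \<delta> \<and> k = \<delta> - x0" for k
  proof
    assume "k \<le> \<delta> \<and> [int k = int \<delta> - int x0] (mod int q)"
    then have "int q dvd int k - (int \<delta> - int x0)" and "\<bar>int k - (int \<delta> - int x0)\<bar> < int q"
      using assms by (auto simp: cong_iff_dvd_diff)
    then have "int k - (int \<delta> - int x0) = 0"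
      using dvd_imp_le_int[of "int k - (int \<delta> - int x0)" "int q"] by linarith
    then show "x0 \<le> \<delta> \<and> k = \<delta> - x0" by linarith
  next
    assume "x0 \<le> \<delta> \<and> k = \<delta> - x0"
    then show "k \<le> \<delta> \<and> [int k = int \<delta> - int x0] (mod int q)"
      by (simp add: of_nat_diff)
  qed
  have "{k. k \<le> \<delta> \<and> [int k = int \<delta> - int x0] (mod int q)} = (if x0 \<le> \<delta> then {\<delta> - x0} else {})"
    unfolding representative by auto
  then show ?thesis unfolding binom_q_def by simp
qed

lemma indicator_res_cong_mod_prime:
  fixes p \<alpha> x0 :: nat
  assumes "prime p" and "\<alpha> \<ge> 1" and "x0 < p ^ \<alpha>"
  shows "[indicator_res (p ^ \<alpha>) (int x0) x
      = (\<Sum>\<delta>\<in>{x0..p ^ \<alpha> - 1}. (-1) ^ (\<delta> - x0) * int (\<delta> choose (\<delta> - x0)) * int_binom x \<delta>)] (mod int p)"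
proof -
  have "[indicator_res (p ^ \<alpha>) (int x0) x
      = polyfract_eval (\<lambda>\<delta>. binom_q \<delta> (p ^ \<alpha>) (int \<delta> - int x0)) (p ^ \<alpha> - 1) x] (mod int p)"
    using indicator_res_cong_polyfract_eval[OF assms(1,2) order.refl, of "int x0" x] by simp
  also have "polyfract_eval (\<lambda>\<delta>. binom_q \<delta> (p ^ \<alpha>) (int \<delta> - int x0)) (p ^ \<alpha> - 1) x
      = (\<Sum>\<delta>\<le>p ^ \<alpha> - 1. if x0 \<le> \<delta> then (-1) ^ (\<delta> - x0) * int (\<delta> choose (\<delta> - x0)) * int_binom x \<delta> else 0)"
    unfolding polyfract_eval_def
  proof (rule sum.cong)
    fix \<delta> assume "\<delta> \<in> {..p ^ \<alpha> - 1}"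
    then have "\<delta> < p ^ \<alpha>" using assms(3) by auto
    then show "int_binom x \<delta> * binom_q \<delta> (p ^ \<alpha>) (int \<delta> - int x0)
        = (if x0 \<le> \<delta> then (-1) ^ (\<delta> - x0) * int (\<delta> choose (\<delta> - x0)) * int_binom x \<delta> else 0)"
      using binom_q_below_modulus[OF _ assms(3)] by simp
  qed simp
  also have "\<dots> = (\<Sum>\<delta>\<in>{..p ^ \<alpha> - 1} \<inter> {\<delta>. x0 \<le> \<delta>}. (-1) ^ (\<delta> - x0) * int (\<delta> choose (\<delta> - x0)) * int_binom x \<delta>)"
    by (simp add: sum.inter_restrict)
  also have "{..p ^ \<alpha> - 1} \<inter> {\<delta>. x0 \<le> \<delta>} = {x0..p ^ \<alpha> - 1}" by auto
  finally show ?thesis .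
qed

theorem theorem3p6:
  fixes p \<alpha> \<beta> x0 :: nat
  assumes "prime p" and "\<alpha> \<ge> 1" and "\<beta> \<ge> 1" and "x0 < p ^ \<alpha>"
  defines "d \<equiv> p ^ \<alpha> - 1 + (\<beta> - 1) * (p - 1) * p ^ (\<alpha> - 1)"
  shows "(\<forall>x::int. [indicator_res (p ^ \<alpha>) (int x0) x
             = polyfract_eval (\<lambda>\<delta>. binom_q \<delta> (p ^ \<alpha>) (int \<delta> - int x0)) d x] (mod int (p ^ \<beta>)))
       \<and> (\<forall>x::int. [polyfract_eval (\<lambda>\<delta>. binom_q \<delta> (p ^ \<alpha>) (int \<delta> - int x0)) d (x + int (p ^ \<alpha>))
             = polyfract_eval (\<lambda>\<delta>. binom_q \<delta> (p ^ \<alpha>) (int \<delta> - int x0)) d x] (mod int (p ^ \<beta>)))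
       \<and> (\<forall>x::int. [indicator_res (p ^ \<alpha>) (int x0) x
             = (\<Sum>\<delta>\<in>{x0..p ^ \<alpha> - 1}. (-1) ^ (\<delta> - x0) * int (\<delta> choose (\<delta> - x0)) * int_binom x \<delta>)] (mod int p))
       \<and> (\<forall>x::int. [indicator_res (p ^ \<alpha>) 0 x
             = (\<Sum>\<delta>\<in>{0..p ^ \<alpha> - 1}. (-1) ^ \<delta> * int_binom x \<delta>)] (mod int p))"
proof -
  define F where "F = polyfract_eval (\<lambda>\<delta>. binom_q \<delta> (p ^ \<alpha>) (int \<delta> - int x0)) d"
  have expansion: "[indicator_res (p ^ \<alpha>) (int x0) x = F x] (mod int (p ^ \<beta>))" for x
    unfolding F_def d_def using indicator_res_cong_polyfract_eval[OF assms(1-3)] .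
  have "indicator_res (p ^ \<alpha>) (int x0) (x + int (p ^ \<alpha>)) = indicator_res (p ^ \<alpha>) (int x0) x" for x
    unfolding indicator_res_def cong_def by simp
  then have "[F (x + int (p ^ \<alpha>)) = F x] (mod int (p ^ \<beta>))" for x
    using expansion[of x] expansion[of "x + int (p ^ \<alpha>)"] by (metis cong_sym cong_trans)
  moreover have "0 < p ^ \<alpha>" using prime_gt_0_nat[OF assms(1)] by simp
  then have "[indicator_res (p ^ \<alpha>) 0 x = (\<Sum>\<delta>\<in>{0..p ^ \<alpha> - 1}. (-1) ^ \<delta> * int_binom x \<delta>)] (mod int p)" for x
    using indicator_res_cong_mod_prime[OF assms(1,2), of 0 x] by simp
  ultimately show ?thesis
    using expansion indicator_res_cong_mod_prime[OF assms(1,2,4)] unfolding F_def by simp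
qed

end
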